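(* There is an absolute constant $K$ such that for every integer $c \ge 0$, the minimal Fibonacci-DFAO generating the sequence $(t(i+c))_{i \ge 0}$ has at most $K(c+1)$ states, where $t(i)$ is the number of $1$s in the canonical Fibonacci (Zeckendorf) representation of $i$, taken modulo $2$.
   Context: The canonical Fibonacci representation of $i \ge 0$ is the unique binary word $x$ without leading zeros and with no factor $11$ such that $i = [x] := \sum_{j=1}^{\ell} x_j F_{\ell-j+2}$ where $x = x_1\cdots x_\ell$ and $F_0=0,F_1=1,F_k=F_{k-1}+F_{k-2}$. A Fibonacci-DFAO reads valid Fibonacci representations (no factor $11$, leading zeros allowed, output independent of leading zeros) most significant digit first, and generates $(s(i))$ if its output on every representation of $i$ is $s(i)$. *)

theory Defs
  imports Main "HOL-Number_Theory.Fib"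
begin

text \<open>Binary words are bool lists (True = digit 1), most significant digit first.
  Value: [x_1 ... x_l] = sum_j x_j F_(l-j+2).\<close>
fun fval :: "bool list \<Rightarrow> nat" where
  "fval [] = 0"
| "fval (b # xs) = (if b then fib (length xs + 2) else 0) + fval xs"

definition fvalid :: "bool list \<Rightarrow> bool" where
  "fvalid w \<longleftrightarrow> \<not> (\<exists>j. Suc j < length w \<and> w ! j \<and> w ! Suc j)"

definition zeck :: "nat \<Rightarrow> bool list" where
  "zeck i = (THE w. fvalid w \<and> (w = [] \<or> hd w) \<and> fval w = i)"

definition fib_thue :: "nat \<Rightarrow> nat" where
  "fib_thue i = length (filter id (zeck i)) mod 2"

text \<open>A DFAO over {0,1} with states {0..<n}, initial state q0, transition delta,
  output function out.  It is well formed if q0 and all transitions stay in {0..<n}.\<close>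
definition dfao_wf :: "nat \<Rightarrow> (nat \<Rightarrow> bool \<Rightarrow> nat) \<Rightarrow> nat \<Rightarrow> bool" where
  "dfao_wf n delta q0 \<longleftrightarrow> q0 < n \<and> (\<forall>q<n. \<forall>b. delta q b < n)"

definition dfao_run :: "(nat \<Rightarrow> bool \<Rightarrow> nat) \<Rightarrow> nat \<Rightarrow> bool list \<Rightarrow> nat" where
  "dfao_run delta q0 w = foldl delta q0 w"

definition fib_dfao_generates ::
  "nat \<Rightarrow> (nat \<Rightarrow> bool \<Rightarrow> nat) \<Rightarrow> nat \<Rightarrow> (nat \<Rightarrow> 'o) \<Rightarrow> (nat \<Rightarrow> 'o) \<Rightarrow> bool" where
  "fib_dfao_generates n delta q0 out s \<longleftrightarrow>
     dfao_wf n delta q0 \<and> (\<forall>w. fvalid w \<longrightarrow> out (dfao_run delta q0 w) = s (fval w))"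

end

theory Submission
  imports Defs
begin

(* By Myhill--Nerode, a Fibonacci-DFAO for the shifted sequence can take as states the
   residuals v \<mapsto> t([u v] + c) of valid words u, so it suffices to show that there are
   O(c) of them. Choose m with c \<le> F(m) and F(m+2) \<le> 6(c+1), pad u with leading zeros
   and split the padded word as p r with |r| = m. Among the valid words of length |p| + K,
   those with prefix p represent an interval of F(K+1) or F(K+2) consecutive numbers (according
   to the last digit of p) starting at [p 0^K], and the next interval belongs to the successor
   of p. Since [r v] + c < F(K+2) + F(K) for K = |r v|, the number [p r v] + c falls into one
   of these two intervals, and t is additive under concatenation of valid words. Hence the
   residual of u is determined by t[p], t([p]+1), the last digit of p, and r: at most 1 + 8
   F(m+2) \<le> 49(c+1) residuals. *)

lemma fvalid_Nil [simp]: "fvalid []"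
  by (simp add: fvalid_def)

lemma fvalid_Cons: "fvalid (x # xs) \<longleftrightarrow> fvalid xs \<and> \<not> (x \<and> xs \<noteq> [] \<and> hd xs)"
proof -
  have split_ex: "(\<exists>j. P j) \<longleftrightarrow> P 0 \<or> (\<exists>j. P (Suc j))" for P :: "nat \<Rightarrow> bool"
    by (metis not0_implies_Suc)
  show ?thesis
    unfolding fvalid_def by (subst split_ex) (cases xs; auto)
qed

lemma fvalid_append:
  "fvalid (xs @ ys) \<longleftrightarrow> fvalid xs \<and> fvalid ys \<and> \<not> (xs \<noteq> [] \<and> ys \<noteq> [] \<and> last xs \<and> hd ys)"
  by (induction xs) (auto simp: fvalid_Cons)

lemma fvalid_replicate_False_append [simp]: "fvalid (replicate n False @ w) \<longleftrightarrow> fvalid w"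
  by (induction n) (auto simp: fvalid_Cons)

lemma fvalid_replicate_False [simp]: "fvalid (replicate n False)"
  using fvalid_replicate_False_append[of n "[]"] by simp

lemma fvalid_append_replicate_False: "fvalid p \<Longrightarrow> fvalid (p @ replicate K False)"
  by (cases K) (auto simp: fvalid_append simp del: replicate_Suc)

lemma fval_replicate_False_append [simp]: "fval (replicate n False @ w) = fval w"
  by (induction n) auto

lemma fval_replicate_False [simp]: "fval (replicate n False) = 0"
  using fval_replicate_False_append[of n "[]"] by simp

lemma fval_append: "fval (xs @ ys) = fval (xs @ replicate (length ys) False) + fval ys"
  by (induction xs) auto

lemma fval_less_fib: "fvalid w \<Longrightarrow> fval w < fib (length w + 2)"
proof (induction w rule: induct_list012)
  case (3 x y zs)
  then have "fvalid (y # zs)" "fvalid zs" "\<not> (x \<and> y)"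
    by (auto simp: fvalid_Cons)
  with 3 show ?case
    by (cases x) (auto simp: numeral_eq_Suc)
qed (auto simp: numeral_eq_Suc split: if_splits)

lemma ex_fvalid_fval: "X < fib (n + 2) \<Longrightarrow> \<exists>w. fvalid w \<and> length w = n \<and> fval w = X"
proof (induction n arbitrary: X rule: fib.induct)
  case 1
  then show ?case by (intro exI[of _ "[]"]) simp
next
  case 2
  then have "X = 0 \<or> X = 1" by (simp add: numeral_eq_Suc less_Suc_eq)
  then show ?case
    by (intro exI[of _ "[X = 1]"]) (auto simp: fvalid_Cons)
next
  case (3 n)
  show ?case
  proof (cases "X < fib (Suc n + 2)")
    case True
    with "3.IH"(1) obtain w where "fvalid w" "length w = Suc n" "fval w = X" by blast
    then show ?thesis by (intro exI[of _ "False # w"]) (simp add: fvalid_Cons)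
  next
    case False
    with "3.prems" have "X - fib (n + 3) < fib (n + 2)" by (simp add: numeral_eq_Suc)
    with "3.IH"(2) obtain w where "fvalid w" "length w = n" "fval w = X - fib (n + 3)" by blast
    with False show ?thesis
      by (intro exI[of _ "True # False # w"]) (auto simp: fvalid_Cons numeral_eq_Suc)
  qed
qed

lemma fvalid_fval_inj:
  "fvalid u \<Longrightarrow> fvalid v \<Longrightarrow> length u = length v \<Longrightarrow> fval u = fval v \<Longrightarrow> u = v"
proof (induction u arbitrary: v)
  case (Cons a u)
  then obtain b v' where v: "v = b # v'" by (cases v) auto
  with Cons.prems have valid: "fvalid u" "fvalid v'" and len: "length u = length v'"
    by (auto simp: fvalid_Cons)
  have "a = b"
    using Cons.prems v len fval_less_fib[OF valid(1)] fval_less_fib[OF valid(2)]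
    by (cases a; cases b) auto
  with Cons.prems v len have "fval u = fval v'" by (cases b) auto
  with Cons.IH valid len v \<open>a = b\<close> show ?case by simp
qed simp

lemma fval_append_less:
  assumes "fvalid (a @ x)" "fvalid (b @ y)" "length a = length b" "length x = length y"
    and "fval a < fval b"
  shows "fval (a @ x) < fval (b @ y)"
  using assms
proof (induction a arbitrary: b)
  case (Cons c a)
  then obtain d b' where b: "b = d # b'" by (cases b) auto
  with Cons.prems have valid: "fvalid (a @ x)" "fvalid (b' @ y)" and len: "length a = length b'"
    by (auto simp: fvalid_Cons)
  show ?case
  proof (cases "c = d")
    case True
    with Cons.prems b have "fval a < fval b'" by (cases c) auto
    with Cons.IH[OF valid len] Cons.prems(4) True b len show ?thesis by (cases c) auto
  next
    case False
    then have "c \<and> \<not> d \<or> \<not> c \<and> d" by blast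
    then show ?thesis
    proof
      assume "c \<and> \<not> d"
      with Cons.prems b len fval_less_fib[of b'] show ?thesis
        using fvalid_append valid(2) by auto
    next
      assume "\<not> c \<and> d"
      with Cons.prems b len fval_less_fib[OF valid(1)] show ?thesis by auto
    qed
  qed
qed simp

lemma fvalid_fval_inj_canonical:
  assumes "fvalid u" "fvalid v" "u = [] \<or> hd u" "v = [] \<or> hd v" "fval u = fval v"
  shows "u = v"
proof -
  have "u = v" if "fvalid u" "fvalid v" "v = [] \<or> hd v" "fval u = fval v"
    "length u \<le> length v" for u v
  proof -
    let ?k = "length v - length u"
    have padded: "replicate ?k False @ u = v"
      using that by (intro fvalid_fval_inj) auto
    with that(3) have "?k = 0" by (cases ?k) auto
    with padded show "u = v" by simp
  qed
  from this[of u v] this[of v u] assms show ?thesis by force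
qed

lemma replicate_False_dropWhile_Not: "\<exists>k. w = replicate k False @ dropWhile Not w"
proof -
  have "replicate (length (takeWhile Not w)) False = takeWhile Not w"
    by (rule replicate_length_same) (auto dest: set_takeWhileD)
  then show ?thesis by (metis takeWhile_dropWhile_id)
qed

lemma zeck_fval: "fvalid w \<Longrightarrow> zeck (fval w) = dropWhile Not w"
  unfolding zeck_def
proof (rule the_equality)
  assume "fvalid w"
  obtain k where k: "w = replicate k False @ dropWhile Not w"
    using replicate_False_dropWhile_Not by blast
  then have "fvalid (dropWhile Not w)" "fval (dropWhile Not w) = fval w"
    using \<open>fvalid w\<close> by (metis fvalid_replicate_False_append, metis fval_replicate_False_append)
  moreover have "dropWhile Not w = [] \<or> hd (dropWhile Not w)"
    using hd_dropWhile[of Not w] by auto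
  ultimately show canonical: "fvalid (dropWhile Not w) \<and>
      (dropWhile Not w = [] \<or> hd (dropWhile Not w)) \<and> fval (dropWhile Not w) = fval w"
    by blast
  fix x assume "fvalid x \<and> (x = [] \<or> hd x) \<and> fval x = fval w"
  with canonical show "x = dropWhile Not w"
    using fvalid_fval_inj_canonical by metis
qed

lemma fib_thue_fval: "fvalid w \<Longrightarrow> fib_thue (fval w) = length (filter id w) mod 2"
  unfolding fib_thue_def zeck_fval
  by (metis filter_append filter_replicate replicate_False_dropWhile_Not append_Nil id_apply)

lemma fib_thue_less_2: "fib_thue i < 2"
  by (simp add: fib_thue_def)

lemma fib_thue_fval_append:
  "fvalid (p @ z) \<Longrightarrow> fib_thue (fval (p @ z)) = (fib_thue (fval p) + fib_thue (fval z)) mod 2"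
  by (simp add: fvalid_append fib_thue_fval mod_add_eq)

definition ext_count :: "bool \<Rightarrow> nat \<Rightarrow> nat" where
  "ext_count b K = (if b then fib (K + 1) else fib (K + 2))"

lemma ext_count_pos: "0 < ext_count b K"
  by (simp add: ext_count_def fib_neq_0_nat)

lemma fval_suffix_less: "fvalid (p @ z) \<Longrightarrow> p \<noteq> [] \<Longrightarrow> fval z < ext_count (last p) (length z)"
proof (cases z)
  case (Cons a z')
  assume "fvalid (p @ z)" "p \<noteq> []"
  with Cons have "fvalid z'" "last p \<longrightarrow> \<not> a" "fvalid z"
    by (auto simp: fvalid_append fvalid_Cons)
  with Cons fval_less_fib[of z'] fval_less_fib[of z] show ?thesis
    by (auto simp: ext_count_def)
qed (simp add: ext_count_pos)

lemma ex_suffix: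
  assumes "fvalid p" "p \<noteq> []" "X < ext_count (last p) K"
  shows "\<exists>z. fvalid (p @ z) \<and> length z = K \<and> fval z = X"
proof (cases "last p")
  case True
  show ?thesis
  proof (cases K)
    case 0
    with assms True show ?thesis by (intro exI[of _ "[]"]) (simp add: ext_count_def)
  next
    case (Suc K')
    with assms True obtain z where "fvalid z" "length z = K'" "fval z = X"
      using ex_fvalid_fval[of X K'] by (auto simp: ext_count_def)
    with assms Suc show ?thesis
      by (intro exI[of _ "False # z"]) (simp add: fvalid_append fvalid_Cons)
  qed
next
  case False
  with assms obtain z where "fvalid z" "length z = K" "fval z = X"
    using ex_fvalid_fval[of X K] by (auto simp: ext_count_def)
  with assms False show ?thesis by (intro exI[of _ z]) (auto simp: fvalid_append)
qed

lemma fval_append_less_block: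
  assumes "fvalid (q @ z)" "fvalid p" "p \<noteq> []" "length q = length p" "length z = K"
    and "fval q \<le> fval p"
  shows "fval (q @ z) < fval (p @ replicate K False) + ext_count (last p) K"
proof (cases "fval q = fval p")
  case True
  with assms have "q = p"
    using fvalid_append fvalid_fval_inj by blast
  with assms show ?thesis
    using fval_append[of p z] fval_suffix_less[of p z] by simp
next
  case False
  with assms have "fval (q @ z) < fval (p @ replicate K False)"
    by (intro fval_append_less) (auto simp: fvalid_append_replicate_False)
  then show ?thesis by simp
qed

lemma fval_successor_block:
  assumes p: "fvalid p" and p': "fvalid p'" and len: "length p' = length p"
    and succ: "fval p' = fval p + 1"
  shows "fval (p' @ replicate K False) = fval (p @ replicate K False) + ext_count (last p) K"
proof (rule antisym)
  have "p \<noteq> []" using len succ by (cases p) auto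
  define V where "V = fval (p @ replicate K False) + ext_count (last p) K"
  obtain z where z: "fvalid (p @ z)" "length z = K" "fval z = ext_count (last p) K - 1"
    using ex_suffix[OF p \<open>p \<noteq> []\<close>] ext_count_pos by (metis diff_less zero_less_one)
  have "fval (p @ z) < fval (p' @ replicate K False)"
    using z p' len succ by (intro fval_append_less) (auto simp: fvalid_append_replicate_False)
  then show "V \<le> fval (p' @ replicate K False)"
    using fval_append[of p z] z ext_count_pos unfolding V_def by simp
  also have "\<dots> < fib (length p + K + 2)"
    using fval_less_fib[OF fvalid_append_replicate_False[OF p']] len by simp
  finally obtain y where y: "fvalid y" "length y = length p + K" "fval y = V"
    using ex_fvalid_fval by blast
  define q where "q = take (length p) y"
  define z where "z = drop (length p) y"
  have y_split: "y = q @ z" and len_qz: "length q = length p" "length z = K"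
    using y(2) unfolding q_def z_def by auto
  have "\<not> fval q \<le> fval p"
    using fval_append_less_block[of q z p K] y y_split len_qz p \<open>p \<noteq> []\<close> unfolding V_def by auto
  then have "fval p' \<le> fval q" using succ by simp
  then show "fval (p' @ replicate K False) \<le> V"
  proof (cases "fval q = fval p'")
    case True
    have "fvalid q" using y(1) y_split fvalid_append by blast
    with True have "q = p'"
      using fvalid_fval_inj p' len_qz len by metis
    then show ?thesis
      using fval_append[of q z] y y_split len_qz by simp
  next
    case False
    with \<open>fval p' \<le> fval q\<close> have "fval (p' @ replicate K False) < fval (q @ z)"
      using y y_split len_qz len p' by (intro fval_append_less) (auto simp: fvalid_append_replicate_False)
    then show ?thesis using y y_split by simp
  qed
qed

lemma successor_last:
  assumes p: "fvalid p" and p': "fvalid p'" and len: "length p' = length p"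
    and succ: "fval p' = fval p + 1" and "last p"
  shows "\<not> last p'"
proof
  assume "last p'"
  have "p \<noteq> []" "p' \<noteq> []" using len succ by (cases p; auto)+
  then have "p = butlast p @ [True]" "p' = butlast p' @ [True]"
    using append_butlast_last_id[of p] append_butlast_last_id[of p'] \<open>last p\<close> \<open>last p'\<close>
    by simp_all
  then obtain s s' where s: "p = s @ [True]" and s': "p' = s' @ [True]" by blast
  with p p' have "fvalid (s' @ [False])" "fvalid (s @ [True])"
    by (auto simp: fvalid_append fvalid_Cons)
  moreover have "fval (s' @ [False]) = fval (s @ [True])"
  proof -
    have last_digit: "fval (xs @ [True]) = fval (xs @ [False]) + 1" for xs
      using fval_append[of xs "[True]"] by simp
    show ?thesis using succ s s' last_digit[of s] last_digit[of s'] by simp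
  qed
  ultimately have "s' @ [False] = s @ [True]"
    using len s s' by (intro fvalid_fval_inj) auto
  then show False by simp
qed

definition offset_thue :: "nat \<Rightarrow> nat \<Rightarrow> bool \<Rightarrow> nat \<Rightarrow> nat \<Rightarrow> nat" where
  "offset_thue a a' b K X =
     (if X < ext_count b K then (a + fib_thue X) mod 2 else (a' + fib_thue (X - ext_count b K)) mod 2)"

lemma fib_thue_fval_block_add:
  assumes p: "fvalid p" and "fval p + 1 < fib (length p + 2)" and X: "X < fib (K + 2) + fib K"
  shows "fib_thue (fval (p @ replicate K False) + X)
           = offset_thue (fib_thue (fval p)) (fib_thue (fval p + 1)) (last p) K X"
proof (cases "X < ext_count (last p) K")
  case True
  have "p \<noteq> []" using assms(2) by (cases p) auto
  with p True obtain z where z: "fvalid (p @ z)" "length z = K" "fval z = X"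
    using ex_suffix by blast
  with True show ?thesis
    using fib_thue_fval_append[OF z(1)] fval_append[of p z] by (simp add: offset_thue_def)
next
  case False
  obtain p' where p': "fvalid p'" "length p' = length p" "fval p' = fval p + 1"
    using ex_fvalid_fval assms(2) by blast
  then have "p' \<noteq> []" by (cases p') auto
  define Y where "Y = X - ext_count (last p) K"
  have "Y < ext_count (last p') K"
  proof (cases "last p")
    case True
    with p p' have "\<not> last p'" using successor_last by blast
    with True X fib_mono[of K "K + 1"] show ?thesis unfolding Y_def ext_count_def by simp
  next
    case False
    with X fib_mono[of K "K + 1"] show ?thesis unfolding Y_def ext_count_def by auto
  qed
  with p' \<open>p' \<noteq> []\<close> obtain z where z: "fvalid (p' @ z)" "length z = K" "fval z = Y"
    using ex_suffix by blast
  have "fval (p' @ z) = fval (p @ replicate K False) + X"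
    using fval_append[of p' z] z fval_successor_block[OF p p'] False unfolding Y_def by simp
  with False z p' show ?thesis
    using fib_thue_fval_append[OF z(1)] unfolding offset_thue_def Y_def by simp
qed

definition residual :: "('a list \<Rightarrow> 'b) \<Rightarrow> 'a list \<Rightarrow> 'a list \<Rightarrow> 'b" where
  "residual F u = (\<lambda>v. F (u @ v))"

lemma residual_snoc: "residual F (u @ [b]) = (\<lambda>v. residual F u (b # v))"
  by (simp add: residual_def)

lemma dfao_of_finite_residuals:
  fixes F :: "bool list \<Rightarrow> 'o"
  assumes "finite (range (residual F))"
  shows "\<exists>delta q0 out. dfao_wf (card (range (residual F))) delta q0 \<and>
           (\<forall>w. out (dfao_run delta q0 w) = F w)"
proof -
  let ?S = "range (residual F)"
  let ?n = "card ?S"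
  obtain g where g: "bij_betw g {0..<?n} ?S"
    using ex_bij_betw_nat_finite[OF assms] by blast
  define idx where "idx = inv_into {0..<?n} g"
  have img: "g ` {0..<?n} = ?S" using g by (simp add: bij_betw_def)
  have idx: "idx (residual F u) < ?n" "g (idx (residual F u)) = residual F u" for u
  proof -
    have "residual F u \<in> g ` {0..<?n}" using img by auto
    from inv_into_into[OF this] f_inv_into_f[OF this]
    show "idx (residual F u) < ?n" "g (idx (residual F u)) = residual F u"
      unfolding idx_def by auto
  qed
  define delta where "delta = (\<lambda>q b. idx (\<lambda>v. g q (b # v)))"
  define q0 where "q0 = idx (residual F [])"
  have run: "dfao_run delta q0 w = idx (residual F w)" for w
  proof (induction w rule: rev_induct)
    case (snoc b w)
    then show ?case
      by (simp add: dfao_run_def delta_def idx(2) residual_snoc)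
  qed (simp add: dfao_run_def q0_def)
  have "dfao_wf ?n delta q0"
    unfolding dfao_wf_def
  proof (intro conjI allI impI)
    show "q0 < ?n" unfolding q0_def by (rule idx(1))
    fix q b assume "q < ?n"
    then have "g q \<in> ?S" using img by auto
    then obtain u where "g q = residual F u" by blast
    then show "delta q b < ?n"
      unfolding delta_def using idx(1)[of "u @ [b]"] by (simp add: residual_snoc)
  qed
  moreover have "g (dfao_run delta q0 w) [] = F w" for w
    unfolding run idx(2) by (simp add: residual_def)
  ultimately show ?thesis by (intro exI[of _ delta] exI[of _ q0] exI[of _ "\<lambda>q. g q []"]) blast
qed

definition shifted_thue :: "nat \<Rightarrow> bool list \<Rightarrow> nat" where
  "shifted_thue c w = (if fvalid w then fib_thue (fval w + c) else 0)"

definition thue_state :: "nat \<Rightarrow> nat \<times> nat \<times> bool \<times> bool list \<Rightarrow> bool list \<Rightarrow> nat" where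
  "thue_state c = (\<lambda>(a, a', b, r) v.
     if fvalid (r @ v) then offset_thue a a' b (length (r @ v)) (fval (r @ v) + c) else 0)"

lemma residual_shifted_thue_in_thue_state_image:
  assumes m: "2 \<le> m" "c \<le> fib m" and u: "fvalid u"
  shows "residual (shifted_thue c) u \<in>
           thue_state c ` ({..<2} \<times> {..<2} \<times> UNIV \<times> {r. fvalid r \<and> length r = m})"
proof -
  define p where "p = False # take (length u) (replicate m False @ u)"
  define r where "r = drop (length u) (replicate m False @ u)"
  define w where "w = p @ r"
  have padded: "w = replicate (m + 1) False @ u"
    unfolding w_def p_def r_def by (simp only: append_Cons append_take_drop_id) simp
  then have w: "w = p @ r" "fvalid w"
    using u unfolding w_def by (auto simp: fvalid_Cons)
  have r: "length r = m" "r \<noteq> []"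
    using m unfolding r_def by auto
  have "fvalid p" "fvalid r" using w by (simp_all add: fvalid_append)
  have "fval p < fib (length p + 1)"
    using fval_less_fib[of "tl p"] \<open>fvalid p\<close> by (simp add: p_def fvalid_Cons)
  moreover have "fib (length p + 1) < fib (length p + 2)"
    using fib_neq_0_nat[of "length p"] by (simp add: p_def numeral_eq_Suc)
  ultimately have p_succ: "fval p + 1 < fib (length p + 2)" by linarith
  have "residual (shifted_thue c) u = residual (shifted_thue c) w"
    unfolding residual_def shifted_thue_def padded
    by (simp only: append_assoc fvalid_replicate_False_append fval_replicate_False_append)
  also have "\<dots> = thue_state c (fib_thue (fval p), fib_thue (fval p + 1), last p, r)"
  proof
    fix v
    have valid: "fvalid (w @ v) \<longleftrightarrow> fvalid (r @ v)"
      using w r by (cases r) (auto simp: fvalid_append)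
    show "residual (shifted_thue c) w v
            = thue_state c (fib_thue (fval p), fib_thue (fval p + 1), last p, r) v"
    proof (cases "fvalid (r @ v)")
      case True
      define K where "K = length (r @ v)"
      have "fval (r @ v) + c < fib (K + 2) + fib K"
        using fval_less_fib[OF True] fib_mono[of m K] r m unfolding K_def by simp
      moreover have "fval (w @ v) + c = fval (p @ replicate K False) + (fval (r @ v) + c)"
        using fval_append[of p "r @ v"] w(1) unfolding K_def by simp
      ultimately have "fib_thue (fval (w @ v) + c)
          = offset_thue (fib_thue (fval p)) (fib_thue (fval p + 1)) (last p) K (fval (r @ v) + c)"
        using fib_thue_fval_block_add[OF \<open>fvalid p\<close> p_succ] by presburger
      with True valid show ?thesis
        by (simp add: residual_def shifted_thue_def thue_state_def K_def)
    qed (simp add: residual_def shifted_thue_def thue_state_def valid)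
  qed
  finally show ?thesis
    using fib_thue_less_2 \<open>fvalid r\<close> r by blast
qed

lemma finite_fvalid_length: "finite {r. fvalid r \<and> length r = m}"
  using finite_lists_length_eq[of "UNIV :: bool set" m] by (simp add: finite_subset)

lemma card_fvalid_length: "card {r. fvalid r \<and> length r = m} \<le> fib (m + 2)"
proof -
  let ?R = "{r. fvalid r \<and> length r = m}"
  have "inj_on fval ?R"
    by (rule inj_onI) (auto intro: fvalid_fval_inj)
  then have "card ?R = card (fval ` ?R)" by (simp add: card_image)
  also have "\<dots> \<le> card {..<fib (m + 2)}"
    using fval_less_fib by (intro card_mono) auto
  finally show ?thesis by simp
qed

lemma ex_fib_scale: "\<exists>m\<ge>2. c \<le> fib m \<and> fib (m + 2) \<le> 6 * (c + 1)"
proof (induction c)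
  case 0
  show ?case by (intro exI[of _ 2]) (simp add: numeral_eq_Suc)
next
  case (Suc c)
  then obtain m where m: "m \<ge> 2" "c \<le> fib m" "fib (m + 2) \<le> 6 * (c + 1)" by blast
  show ?case
  proof (cases "Suc c \<le> fib m")
    case True
    with m show ?thesis by auto
  next
    case False
    with m have c: "c = fib m" by simp
    obtain k where k: "m = k + 1" using m(1) by (metis add.commute add_leD1 le_Suc_ex one_add_one)
    have "fib (m + 1) = fib m + fib k" "fib k \<le> fib m"
      using k by (simp_all add: fib_mono)
    moreover have "fib (m + 3) = 2 * fib (m + 1) + fib m"
      by (simp add: numeral_eq_Suc)
    ultimately have "fib (m + 1 + 2) \<le> 6 * (Suc c + 1)" "Suc c \<le> fib (m + 1)"
      using c fib_neq_0_nat[of k] k m(1) by (auto simp: numeral_eq_Suc)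
    with m(1) show ?thesis by (intro exI[of _ "m + 1"]) auto
  qed
qed

lemma finite_card_residuals_shifted_thue:
  "finite (range (residual (shifted_thue c))) \<and> card (range (residual (shifted_thue c))) \<le> 49 * (c + 1)"
proof -
  obtain m where m: "m \<ge> 2" "c \<le> fib m" "fib (m + 2) \<le> 6 * (c + 1)"
    using ex_fib_scale by blast
  define D where "D = {..<2::nat} \<times> {..<2::nat} \<times> (UNIV :: bool set) \<times> {r. fvalid r \<and> length r = m}"
  have "residual (shifted_thue c) u \<in> insert (\<lambda>_. 0) (thue_state c ` D)" for u
  proof (cases "fvalid u")
    case True
    with m show ?thesis unfolding D_def by (simp add: residual_shifted_thue_in_thue_state_image)
  next
    case False
    then have "residual (shifted_thue c) u = (\<lambda>_. 0)"
      by (auto simp: residual_def shifted_thue_def fvalid_append)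
    then show ?thesis by simp
  qed
  then have sub: "range (residual (shifted_thue c)) \<subseteq> insert (\<lambda>_. 0) (thue_state c ` D)"
    by blast
  have "finite D" unfolding D_def by (simp add: finite_fvalid_length)
  then have fin: "finite (insert (\<lambda>_. 0) (thue_state c ` D))" by simp
  have "card (range (residual (shifted_thue c))) \<le> card (insert (\<lambda>_. 0) (thue_state c ` D))"
    using card_mono[OF fin sub] .
  also have "\<dots> \<le> Suc (card (thue_state c ` D))"
    using \<open>finite D\<close> by (simp add: card_insert_if)
  also have "\<dots> \<le> Suc (card D)"
    using card_image_le[OF \<open>finite D\<close>] by simp
  also have "\<dots> \<le> Suc (8 * fib (m + 2))"
    using card_fvalid_length[of m] by (simp add: D_def card_cartesian_product)
  also have "\<dots> \<le> 49 * (c + 1)"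
    using m(3) by simp
  finally show ?thesis using finite_subset[OF sub fin] by blast
qed

theorem theorem14:
  shows "\<exists>K::nat. \<forall>c::nat. \<exists>n delta q0 (out :: nat \<Rightarrow> nat).
           fib_dfao_generates n delta q0 out (\<lambda>i. fib_thue (i + c)) \<and> n \<le> K * (c + 1)"
proof (rule exI[of _ 49], intro allI)
  fix c
  let ?n = "card (range (residual (shifted_thue c)))"
  have "finite (range (residual (shifted_thue c)))" and card: "?n \<le> 49 * (c + 1)"
    using finite_card_residuals_shifted_thue by blast+
  then obtain delta q0 out where wf: "dfao_wf ?n delta q0"
    and out: "\<And>w. out (dfao_run delta q0 w) = shifted_thue c w"
    using dfao_of_finite_residuals by blast
  have "fib_dfao_generates ?n delta q0 out (\<lambda>i. fib_thue (i + c))"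
    using wf out by (simp add: fib_dfao_generates_def shifted_thue_def)
  with card show "\<exists>n delta q0 (out :: nat \<Rightarrow> nat).
      fib_dfao_generates n delta q0 out (\<lambda>i. fib_thue (i + c)) \<and> n \<le> 49 * (c + 1)"
    by blast
qed

end
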